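(* Let $\mathrm{Re}\,z<-1$, $C,C'\ge0$, and $\delta,\gamma\ge0$ with $\frac12\le\gamma+\delta\le1$. Then for every $\Psi\in\mathscr H$: $$\int\omega^{(\mathrm a)}(q)[\omega^{(\mathrm a)}(q)+|\mathrm{Re}\,z|]^{2(\delta+\gamma)-1}\big\|R_0(z-\omega^{(\mathrm a)}(q)-C)^\delta\mathbf a(q)R_0(z-C')^\gamma\Psi\big\|^2dq\le\|\Psi\|^2,$$ $$\int\omega^{(\mathrm b)}(k)[\omega^{(\mathrm b)}(k)+|\mathrm{Re}\,z|]^{2(\delta+\gamma)-1}\big\|R_0(z-\omega^{(\mathrm b)}(k)-C)^\delta\mathbf b(k)R_0(z-C')^\gamma\Psi\big\|^2dk\le\|\Psi\|^2.$$
   Context: Setting: $\mathscr H=\mathscr F_{\mathrm s}(L^2(\mathbb R^d))\otimes\mathscr F_{\mathrm a}(L^2(\mathbb R^d))$ with bosonic operators $\mathbf a(q),\mathbf a^*(q)$ (CCR) on the first factor and fermionic operators $\mathbf b(k),\mathbf b^*(k)$ (CAR) on the second, mutually commuting; $m_{\mathrm b},m_{\mathrm f}>0$, $\omega^{(\mathrm a)}(q)=\sqrt{|q|^2+m_{\mathrm b}^2}$, $\omega^{(\mathrm b)}(k)=\sqrt{|k|^2+m_{\mathrm f}^2}$, $H_0=\int\omega^{(\mathrm b)}(k)\mathbf b^*(k)\mathbf b(k)\,dk+\int\omega^{(\mathrm a)}(q)\mathbf a^*(q)\mathbf a(q)\,dq$. For $\mathrm{Re}\,w<0$, $R_0(w)=(H_0-w)^{-1}$,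 with fractional powers by functional calculus. *)

theory Defs
  imports "HOL-Analysis.Analysis"
begin

text \<open>Concrete realisation of
  F_s(L^2(R^d)) (x) F_a(L^2(R^d)) = direct sum over (n,m) of
  L^2_{sym in n bosons, antisym in m fermions}((R^d)^n x (R^d)^m).
  A configuration in sector (n,m) is a pair (x,y) of functions
  x : nat => R^d (extensional on {..<n}), y : nat => R^d (extensional on {..<m}).\<close>

type_synonym 'd config = "(nat \<Rightarrow> real^'d) \<times> (nat \<Rightarrow> real^'d)"
type_synonym 'd fock = "nat \<Rightarrow> nat \<Rightarrow> 'd config \<Rightarrow> complex"

definition fock_meas :: "nat \<Rightarrow> nat \<Rightarrow> 'd::finite config measure" where
  "fock_meas n m = (PiM {..<n} (\<lambda>_. lborel)) \<Otimes>\<^sub>M (PiM {..<m} (\<lambda>_. lborel))"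

definition omega :: "real \<Rightarrow> real^'d::finite \<Rightarrow> real" where
  "omega mass p = sqrt ((norm p)^2 + mass^2)"

definition fock_norm2 :: "'d::finite fock \<Rightarrow> ennreal" where
  "fock_norm2 Psi = (\<Sum>n. \<Sum>m. \<integral>\<^sup>+ c. ennreal ((cmod (Psi n m c))^2) \<partial>fock_meas n m)"

definition fock_vector :: "'d::finite fock \<Rightarrow> bool" where
  "fock_vector Psi \<longleftrightarrow>
     (\<forall>n m. Psi n m \<in> borel_measurable (fock_meas n m)) \<and>
     (\<forall>n m x y \<sigma>. (x, y) \<in> space (fock_meas n m) \<longrightarrow> \<sigma> permutes {..<n} \<longrightarrow>
         Psi n m (x \<circ> \<sigma>, y) = Psi n m (x, y)) \<and>
     (\<forall>n m x y \<sigma>. (x, y) \<in> space (fock_meas n m) \<longrightarrow> \<sigma> permutes {..<m} \<longrightarrow>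
         Psi n m (x, y \<circ> \<sigma>) = of_int (sign \<sigma>) * Psi n m (x, y)) \<and>
     fock_norm2 Psi < \<infinity>"

definition energy :: "real \<Rightarrow> real \<Rightarrow> nat \<Rightarrow> nat \<Rightarrow> 'd::finite config \<Rightarrow> real" where
  "energy mb mf n m c = (\<Sum>i<n. omega mb (fst c i)) + (\<Sum>j<m. omega mf (snd c j))"

text \<open>R_0(w)^s = (H_0 - w)^(-s) via functional calculus (principal branch),
  acting as a multiplication operator\<close>
definition res_pow :: "real \<Rightarrow> real \<Rightarrow> complex \<Rightarrow> real \<Rightarrow> 'd::finite fock \<Rightarrow> 'd fock" where
  "res_pow mb mf w s Phi = (\<lambda>n m c.
      (complex_of_real (energy mb mf n m c) - w) powr (complex_of_real (- s)) * Phi n m c)"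

definition ins :: "nat \<Rightarrow> real^'d::finite \<Rightarrow> (nat \<Rightarrow> real^'d) \<Rightarrow> nat \<Rightarrow> real^'d" where
  "ins n q x = (\<lambda>i. if i = 0 then q else if i \<le> n then x (i - 1) else undefined)"

definition ann_a :: "'d::finite fock \<Rightarrow> real^'d \<Rightarrow> 'd fock" where
  "ann_a Phi q = (\<lambda>n m c. complex_of_real (sqrt (real (n + 1))) * Phi (n + 1) m (ins n q (fst c), snd c))"

definition ann_b :: "'d::finite fock \<Rightarrow> real^'d \<Rightarrow> 'd fock" where
  "ann_b Phi k = (\<lambda>n m c. complex_of_real (sqrt (real (m + 1))) * Phi n (m + 1) (fst c, ins m k (snd c)))"

end

theory Submission
  imports Defs
begin

text \<open>Both resolvent arguments have real part at least \<open>\<omega>(q) + E + |Re z|\<close>, where \<open>E\<close> is the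
  free energy of the particles left after the annihilation; since \<open>2(\<delta>+\<gamma>) - 1 \<ge> 0\<close> this bounds
  the weighted integrand, sector by sector, by \<open>(n+1) \<omega>(q) / (\<omega>(q) + E + |Re z|) |\<Psi>|\<^sup>2\<close>. After integrating over \<open>q\<close>, permutation symmetry of
  \<open>|\<Psi>|\<^sup>2\<close> spreads the factor \<open>(n+1) \<omega>(q)\<close> over all \<open>n+1\<close> bosons, giving the total energy
  \<open>S\<close> of the configuration, and \<open>S / (S + E' + |Re z|) \<le> 1\<close>. The fermionic bound is the bosonic
  one for the vector with the two species exchanged: antisymmetry still makes \<open>|\<Psi>|\<^sup>2\<close> symmetric.\<close>

lemma measurable_PiM_permute:
  assumes "\<sigma> permutes I"
  shows "(\<lambda>x. x \<circ> \<sigma>) \<in> measurable (PiM I (\<lambda>_. M)) (PiM I (\<lambda>_. M))"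
proof (rule measurable_PiM_single')
  fix i assume "i \<in> I"
  then show "(\<lambda>x. (x \<circ> \<sigma>) i) \<in> measurable (PiM I (\<lambda>_. M)) M"
    using assms by (simp add: permutes_in_image)
qed (use assms in \<open>auto simp: space_PiM PiE_def extensional_def permutes_in_image permutes_not_in\<close>)

lemma distr_PiM_permute:
  assumes "sigma_finite_measure M" and "finite I" and \<sigma>: "\<sigma> permutes I"
  shows "distr (PiM I (\<lambda>_. M)) (PiM I (\<lambda>_. M)) (\<lambda>x. x \<circ> \<sigma>) = PiM I (\<lambda>_. M)"
proof -
  interpret product_sigma_finite "\<lambda>_. M"
    using assms(1) by (simp add: product_sigma_finite_def)
  show ?thesis
  proof (rule PiM_eqI[OF \<open>finite I\<close>])
    fix A assume A: "\<And>i. i \<in> I \<Longrightarrow> A i \<in> sets M"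
    have inv: "inv \<sigma> permutes I"
      using \<sigma> by (rule permutes_inv)
    have A': "\<And>j. j \<in> I \<Longrightarrow> A (inv \<sigma> j) \<in> sets M"
      using A inv by (simp add: permutes_in_image)
    have \<sigma>_inv: "\<sigma> (inv \<sigma> j) = j" "inv \<sigma> (\<sigma> j) = j" for j
      using permutes_inverses[OF \<sigma>] by auto
    have "x \<circ> \<sigma> \<in> Pi\<^sub>E I A \<longleftrightarrow> x \<in> Pi\<^sub>E I (\<lambda>j. A (inv \<sigma> j))"
      if "x \<in> space (PiM I (\<lambda>_. M))" for x
    proof -
      have "(\<forall>i\<in>I. x (\<sigma> i) \<in> A i) \<longleftrightarrow> (\<forall>j\<in>I. x j \<in> A (inv \<sigma> j))"
        using \<sigma> inv \<sigma>_inv by (metis permutes_in_image)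
      moreover have "x \<circ> \<sigma> \<in> extensional I"
        using that \<sigma> by (auto simp: space_PiM PiE_def extensional_def permutes_not_in)
      ultimately show ?thesis
        using that by (auto simp: space_PiM PiE_def Pi_iff)
    qed
    moreover have "Pi\<^sub>E I (\<lambda>j. A (inv \<sigma> j)) \<subseteq> space (PiM I (\<lambda>_. M))"
      using sets.sets_into_space[OF A'] by (auto simp: space_PiM)
    ultimately have "(\<lambda>x. x \<circ> \<sigma>) -` Pi\<^sub>E I A \<inter> space (PiM I (\<lambda>_. M)) = Pi\<^sub>E I (\<lambda>j. A (inv \<sigma> j))"
      by blast
    then have "emeasure (distr (PiM I (\<lambda>_. M)) (PiM I (\<lambda>_. M)) (\<lambda>x. x \<circ> \<sigma>)) (Pi\<^sub>E I A)
        = (\<Prod>j\<in>I. emeasure M (A (inv \<sigma> j)))"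
      using A A' \<open>finite I\<close> measurable_PiM_permute[OF \<sigma>]
      by (subst emeasure_distr) (auto simp: emeasure_PiM intro!: sets_PiM_I_finite)
    also have "\<dots> = (\<Prod>i\<in>I. emeasure M (A i))"
      using prod.permute[OF inv, of "\<lambda>i. emeasure M (A i)"] by (simp add: comp_def)
    finally show "emeasure (distr (PiM I (\<lambda>_. M)) (PiM I (\<lambda>_. M)) (\<lambda>x. x \<circ> \<sigma>)) (Pi\<^sub>E I A)
        = (\<Prod>i\<in>I. emeasure M (A i))" .
  qed simp
qed

lemma nn_integral_PiM_permute:
  assumes "sigma_finite_measure M" and "finite I" and "\<sigma> permutes I"
    and "f \<in> borel_measurable (PiM I (\<lambda>_. M))"
  shows "(\<integral>\<^sup>+x. f (x \<circ> \<sigma>) \<partial>PiM I (\<lambda>_. M)) = (\<integral>\<^sup>+x. f x \<partial>PiM I (\<lambda>_. M))"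
  using nn_integral_distr[OF measurable_PiM_permute[OF assms(3), of M], of f] assms
  by (simp add: distr_PiM_permute)

lemma suminf_comm_ennreal:
  fixes f :: "nat \<Rightarrow> nat \<Rightarrow> ennreal"
  shows "(\<Sum>n. \<Sum>m. f n m) = (\<Sum>m. \<Sum>n. f n m)"
  using nn_integral_fst_count_space[of "case_prod f"] nn_integral_snd_count_space[of "case_prod f"]
  by (simp add: nn_integral_count_space_nat)

lemma suminf_Suc_le_ennreal:
  fixes f :: "nat \<Rightarrow> ennreal"
  shows "(\<Sum>n. f (Suc n)) \<le> (\<Sum>n. f n)"
proof (rule suminf_le_const)
  fix k
  have "(\<Sum>n<k. f (Suc n)) \<le> f 0 + (\<Sum>n<k. f (Suc n))" by (simp add: add_increasing)
  also have "\<dots> = (\<Sum>n<Suc k. f n)" by (rule sum.lessThan_Suc_shift[symmetric])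
  also have "\<dots> \<le> (\<Sum>n. f n)" by (rule sum_le_suminf) auto
  finally show "(\<Sum>n<k. f (Suc n)) \<le> (\<Sum>n. f n)" .
qed simp

lemma borel_measurable_PiM_component_comp:
  "i \<in> I \<Longrightarrow> w \<in> borel_measurable M \<Longrightarrow> (\<lambda>x. w (x i)) \<in> borel_measurable (PiM I (\<lambda>_. M))"
  by (rule measurable_compose[OF measurable_component_singleton])

lemma nn_integral_PiM_symmetric_weight_le:
  fixes M :: "'a measure" and w :: "'a \<Rightarrow> real" and G :: "(nat \<Rightarrow> 'a) \<Rightarrow> real"
  assumes M: "sigma_finite_measure M"
    and w: "w \<in> borel_measurable M" "\<And>q. w q \<ge> 0" and b: "b \<ge> 0"
    and G: "G \<in> borel_measurable (PiM {..<Suc n} (\<lambda>_. M))" "\<And>x. G x \<ge> 0"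
    and G_sym: "\<And>x \<sigma>. x \<in> space (PiM {..<Suc n} (\<lambda>_. M)) \<Longrightarrow> \<sigma> permutes {..<Suc n} \<Longrightarrow>
      G (x \<circ> \<sigma>) = G x"
  shows "(\<integral>\<^sup>+x. ennreal (real (Suc n) * w (x n) / ((\<Sum>i<Suc n. w (x i)) + b) * G x)
      \<partial>PiM {..<Suc n} (\<lambda>_. M)) \<le> (\<integral>\<^sup>+x. ennreal (G x) \<partial>PiM {..<Suc n} (\<lambda>_. M))"
proof -
  let ?P = "PiM {..<Suc n} (\<lambda>_. M)"
  define S where "S x = (\<Sum>i<Suc n. w (x i))" for x :: "nat \<Rightarrow> 'a"
  define k where "k j x = w (x j) / (S x + b) * G x" for j x
  have S_nonneg: "S x \<ge> 0" for x
    unfolding S_def using w(2) by (simp add: sum_nonneg)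
  have k_nonneg: "k j x \<ge> 0" for j x
    unfolding k_def using S_nonneg[of x] w(2) b G(2) by simp
  have [measurable]: "(\<lambda>x. w (x j)) \<in> borel_measurable ?P" if "j < Suc n" for j
    using that w(1) by (intro borel_measurable_PiM_component_comp) auto
  have k_meas: "(\<lambda>x. ennreal (k j x)) \<in> borel_measurable ?P" if "j < Suc n" for j
    using that G(1) unfolding k_def S_def by measurable
  have k_eq: "(\<integral>\<^sup>+x. ennreal (k j x) \<partial>?P) = (\<integral>\<^sup>+x. ennreal (k n x) \<partial>?P)" if "j < Suc n" for j
  proof -
    let ?s = "Transposition.transpose j n"
    have s: "?s permutes {..<Suc n}"
      using that by (intro permutes_swap_id) auto
    have "S (x \<circ> ?s) = S x" for x
      unfolding S_def using sum.permute[OF s, of "\<lambda>i. w (x i)"] by (simp add: comp_def)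
    then have "(\<integral>\<^sup>+x. ennreal (k n (x \<circ> ?s)) \<partial>?P) = (\<integral>\<^sup>+x. ennreal (k j x) \<partial>?P)"
      using G_sym[OF _ s] by (intro nn_integral_cong) (simp add: k_def transpose_def)
    moreover have "(\<integral>\<^sup>+x. ennreal (k n (x \<circ> ?s)) \<partial>?P) = (\<integral>\<^sup>+x. ennreal (k n x) \<partial>?P)"
      using k_meas by (intro nn_integral_PiM_permute[OF M _ s]) auto
    ultimately show ?thesis by simp
  qed
  have "(\<integral>\<^sup>+x. ennreal (real (Suc n) * w (x n) / (S x + b) * G x) \<partial>?P)
      = of_nat (Suc n) * (\<integral>\<^sup>+x. ennreal (k n x) \<partial>?P)"
  proof -
    have "ennreal (real (Suc n) * w (x n) / (S x + b) * G x) = of_nat (Suc n) * ennreal (k n x)" for x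
    proof -
      have "real (Suc n) * w (x n) / (S x + b) * G x = real (Suc n) * k n x"
        by (simp add: k_def)
      then show ?thesis
        using k_nonneg[of n x] ennreal_mult'[of "real (Suc n)" "k n x"]
        by (simp only: ennreal_of_nat_eq_real_of_nat of_nat_0_le_iff)
    qed
    then show ?thesis
      using k_meas by (simp add: nn_integral_cmult)
  qed
  also have "\<dots> = (\<Sum>j<Suc n. \<integral>\<^sup>+x. ennreal (k n x) \<partial>?P)"
    by simp
  also have "\<dots> = (\<Sum>j<Suc n. \<integral>\<^sup>+x. ennreal (k j x) \<partial>?P)"
    by (intro sum.cong refl k_eq[symmetric]) simp
  also have "\<dots> = (\<integral>\<^sup>+x. (\<Sum>j<Suc n. ennreal (k j x)) \<partial>?P)"
    by (rule nn_integral_sum[symmetric]) (use k_meas in auto)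
  also have "\<dots> = (\<integral>\<^sup>+x. ennreal (\<Sum>j<Suc n. k j x) \<partial>?P)"
    using k_nonneg by (intro nn_integral_cong sum_ennreal) auto
  also have "\<dots> \<le> (\<integral>\<^sup>+x. ennreal (G x) \<partial>?P)"
  proof (intro nn_integral_mono ennreal_leI)
    fix x
    have "(\<Sum>j<Suc n. k j x) = S x / (S x + b) * G x"
      unfolding k_def by (simp only: sum_distrib_right[symmetric] sum_divide_distrib[symmetric] S_def)
    also have "\<dots> \<le> G x"
      using S_nonneg[of x] b G(2)[of x] by (intro mult_left_le_one_le) (auto simp: divide_le_eq_1)
    finally show "(\<Sum>j<Suc n. k j x) \<le> G x" .
  qed
  finally show ?thesis unfolding S_def .
qed

lemma nn_integral_PiM_insert_weight_le:
  fixes M :: "'a measure" and w :: "'a \<Rightarrow> real" and G :: "(nat \<Rightarrow> 'a) \<Rightarrow> real"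
  assumes M: "sigma_finite_measure M"
    and w: "w \<in> borel_measurable M" "\<And>q. w q \<ge> 0" and b: "b \<ge> 0"
    and G: "G \<in> borel_measurable (PiM {..<Suc n} (\<lambda>_. M))" "\<And>x. G x \<ge> 0"
    and G_sym: "\<And>x \<sigma>. x \<in> space (PiM {..<Suc n} (\<lambda>_. M)) \<Longrightarrow> \<sigma> permutes {..<Suc n} \<Longrightarrow>
      G (x \<circ> \<sigma>) = G x"
  shows "(\<integral>\<^sup>+q. \<integral>\<^sup>+x. ennreal (real (Suc n) * w q / (w q + (\<Sum>i<n. w (x i)) + b) * G (x(n := q)))
      \<partial>PiM {..<n} (\<lambda>_. M) \<partial>M) \<le> (\<integral>\<^sup>+x. ennreal (G x) \<partial>PiM {..<Suc n} (\<lambda>_. M))"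
proof -
  interpret product_sigma_finite "\<lambda>_. M"
    using M by (simp add: product_sigma_finite_def)
  define h where "h x = ennreal (real (Suc n) * w (x n) / ((\<Sum>i<Suc n. w (x i)) + b) * G x)"
    for x :: "nat \<Rightarrow> 'a"
  have [measurable]: "(\<lambda>x. w (x j)) \<in> borel_measurable (PiM {..<Suc n} (\<lambda>_. M))" if "j < Suc n" for j
    using that w(1) by (intro borel_measurable_PiM_component_comp) auto
  have "h \<in> borel_measurable (PiM (insert n {..<n}) (\<lambda>_. M))"
    using G(1) unfolding h_def lessThan_Suc[symmetric] by measurable
  then have "(\<integral>\<^sup>+q. \<integral>\<^sup>+x. h (x(n := q)) \<partial>PiM {..<n} (\<lambda>_. M) \<partial>M)
      = (\<integral>\<^sup>+x. h x \<partial>PiM {..<Suc n} (\<lambda>_. M))"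
    by (simp add: product_nn_integral_insert_rev lessThan_Suc)
  moreover have "(\<Sum>i<Suc n. w ((x(n := q)) i)) = w q + (\<Sum>i<n. w (x i))" for x q
    by (simp add: sum.lessThan_Suc add.commute)
  ultimately show ?thesis
    using nn_integral_PiM_symmetric_weight_le[OF M w b G G_sym] by (simp add: h_def add_ac)
qed

lemma nn_integral_pair_reorder:
  fixes f :: "'a \<times> 'b \<times> 'c \<Rightarrow> ennreal"
  assumes L: "sigma_finite_measure L" and AB: "pair_sigma_finite A B"
    and f: "f \<in> borel_measurable (L \<Otimes>\<^sub>M (A \<Otimes>\<^sub>M B))"
  shows "(\<integral>\<^sup>+q. \<integral>\<^sup>+c. f (q, c) \<partial>(A \<Otimes>\<^sub>M B) \<partial>L) = (\<integral>\<^sup>+y. \<integral>\<^sup>+q. \<integral>\<^sup>+x. f (q, (x, y)) \<partial>A \<partial>L \<partial>B)"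
proof -
  interpret AB: pair_sigma_finite A B by (rule AB)
  interpret LAB: pair_sigma_finite L "A \<Otimes>\<^sub>M B"
    using L AB.sigma_finite_measure_axioms by (simp add: pair_sigma_finite_def)
  have g: "(\<lambda>c. \<integral>\<^sup>+q. f (q, c) \<partial>L) \<in> borel_measurable (A \<Otimes>\<^sub>M B)"
    using sigma_finite_measure.borel_measurable_nn_integral_fst[OF L measurable_pair_swap[OF f]] by simp
  have "(\<integral>\<^sup>+q. \<integral>\<^sup>+c. f (q, c) \<partial>(A \<Otimes>\<^sub>M B) \<partial>L) = (\<integral>\<^sup>+c. \<integral>\<^sup>+q. f (q, c) \<partial>L \<partial>(A \<Otimes>\<^sub>M B))"
    using LAB.Fubini[OF f] by simp
  also have "\<dots> = (\<integral>\<^sup>+y. \<integral>\<^sup>+x. \<integral>\<^sup>+q. f (q, (x, y)) \<partial>L \<partial>A \<partial>B)"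
    using AB.nn_integral_snd[OF g] by simp
  also have "\<dots> = (\<integral>\<^sup>+y. \<integral>\<^sup>+q. \<integral>\<^sup>+x. f (q, (x, y)) \<partial>A \<partial>L \<partial>B)"
  proof (rule nn_integral_cong)
    fix y assume y: "y \<in> space B"
    interpret AL: pair_sigma_finite A L
      using L by (simp add: pair_sigma_finite_def AB.M1.sigma_finite_measure_axioms)
    have "(\<lambda>p. (snd p, (fst p, y))) \<in> measurable (A \<Otimes>\<^sub>M L) (L \<Otimes>\<^sub>M (A \<Otimes>\<^sub>M B))"
      using y by measurable
    then have "(\<lambda>p. f (snd p, (fst p, y))) \<in> borel_measurable (A \<Otimes>\<^sub>M L)"
      using f by (rule measurable_compose)
    then show "(\<integral>\<^sup>+x. \<integral>\<^sup>+q. f (q, (x, y)) \<partial>L \<partial>A) = (\<integral>\<^sup>+q. \<integral>\<^sup>+x. f (q, (x, y)) \<partial>A \<partial>L)"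
      using AL.Fubini by fastforce
  qed
  finally show ?thesis .
qed

lemma sigma_finite_PiM_lborel:
  assumes "finite I"
  shows "sigma_finite_measure (PiM I (\<lambda>_. lborel :: 'a::euclidean_space measure))"
proof -
  interpret product_sigma_finite "\<lambda>_. lborel :: 'a measure"
    by (simp add: product_sigma_finite_def sigma_finite_lborel)
  show ?thesis using sigma_finite[OF assms] .
qed

lemma pair_sigma_finite_fock_meas:
  "pair_sigma_finite (PiM {..<n::nat} (\<lambda>_. lborel)) (PiM {..<m::nat} (\<lambda>_. lborel :: (real^'d::finite) measure))"
  unfolding pair_sigma_finite_def by (intro conjI sigma_finite_PiM_lborel finite_lessThan)

lemma sigma_finite_fock_meas: "sigma_finite_measure (fock_meas n m :: 'd::finite config measure)"
proof -
  interpret pair_sigma_finite "PiM {..<n} (\<lambda>_. lborel)" "PiM {..<m} (\<lambda>_. lborel :: (real^'d) measure)"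
    by (rule pair_sigma_finite_fock_meas)
  show ?thesis
    unfolding fock_meas_def by (rule P.sigma_finite_measure_axioms)
qed

lemma nn_integral_fock_meas_swap:
  assumes "f \<in> borel_measurable (fock_meas m n :: 'd::finite config measure)"
  shows "(\<integral>\<^sup>+c. f (snd c, fst c) \<partial>fock_meas n m) = (\<integral>\<^sup>+c. f c \<partial>fock_meas m n)"
proof -
  interpret pair_sigma_finite "PiM {..<m} (\<lambda>_. lborel)" "PiM {..<n} (\<lambda>_. lborel :: (real^'d) measure)"
    by (rule pair_sigma_finite_fock_meas)
  have "fock_meas m n = distr (fock_meas n m) (fock_meas m n :: 'd config measure) (\<lambda>(x, y). (y, x))"
    unfolding fock_meas_def by (rule distr_pair_swap)
  then have "(\<integral>\<^sup>+c. f c \<partial>fock_meas m n)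
      = (\<integral>\<^sup>+c. f c \<partial>distr (fock_meas n m) (fock_meas m n) (\<lambda>(x, y). (y, x)))"
    by (rule arg_cong)
  also have "\<dots> = (\<integral>\<^sup>+c. f ((\<lambda>(x, y). (y, x)) c) \<partial>fock_meas n m)"
    using assms unfolding fock_meas_def by (intro nn_integral_distr measurable_pair_swap') simp
  finally show ?thesis
    by (simp add: case_prod_beta)
qed

lemma fock_sum_swap:
  fixes f :: "nat \<Rightarrow> nat \<Rightarrow> 'd::finite config \<Rightarrow> ennreal"
  assumes "\<And>n m. f n m \<in> borel_measurable (fock_meas n m)"
  shows "(\<Sum>n. \<Sum>m. \<integral>\<^sup>+c. f m n (snd c, fst c) \<partial>fock_meas n m) = (\<Sum>n. \<Sum>m. \<integral>\<^sup>+c. f n m c \<partial>fock_meas n m)"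
proof -
  have "(\<Sum>n. \<Sum>m. \<integral>\<^sup>+c. f m n (snd c, fst c) \<partial>fock_meas n m) = (\<Sum>n. \<Sum>m. \<integral>\<^sup>+c. f m n c \<partial>fock_meas m n)"
    using assms by (simp add: nn_integral_fock_meas_swap)
  also have "\<dots> = (\<Sum>n. \<Sum>m. \<integral>\<^sup>+c. f n m c \<partial>fock_meas n m)"
    by (rule suminf_comm_ennreal)
  finally show ?thesis .
qed

lemma norm_powr_neg_le:
  fixes u :: complex
  assumes "0 \<le> s" and "0 < D" and "D \<le> Re u"
  shows "cmod (u powr complex_of_real (- s)) \<le> D powr (- s)"
proof -
  have "D \<le> cmod u"
    using assms(3) complex_Re_le_cmod by (rule order_trans)
  then show ?thesis
    using assms by (simp add: norm_powr_real_powr' powr_mono2')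
qed

lemma resolvent_annihilation_pointwise:
  fixes z P :: complex and w E C C' \<delta> \<gamma> :: real and N :: nat
  assumes w: "0 < w" and E: "0 \<le> E" and z: "Re z \<le> 0" and C: "0 \<le> C" and C': "0 \<le> C'"
    and \<delta>: "0 \<le> \<delta>" and \<gamma>: "0 \<le> \<gamma>" and s: "1/2 \<le> \<gamma> + \<delta>"
  shows "w * (w + \<bar>Re z\<bar>) powr (2 * (\<delta> + \<gamma>) - 1) *
      (cmod ((complex_of_real E - (z - complex_of_real w - complex_of_real C)) powr complex_of_real (- \<delta>) *
        (complex_of_real (sqrt (real (N + 1))) *
          ((complex_of_real (w + E) - (z - complex_of_real C')) powr complex_of_real (- \<gamma>) * P))))\<^sup>2
    \<le> real (Suc N) * w / (w + E + \<bar>Re z\<bar>) * (cmod P)\<^sup>2"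
proof -
  define D where "D = w + E + \<bar>Re z\<bar>"
  define u1 where "u1 = complex_of_real E - (z - complex_of_real w - complex_of_real C)"
  define u2 where "u2 = complex_of_real (w + E) - (z - complex_of_real C')"
  have D: "0 < D"
    using w E by (simp add: D_def)
  have u1: "cmod (u1 powr complex_of_real (- \<delta>)) \<le> D powr (- \<delta>)"
    using \<delta> D C z by (intro norm_powr_neg_le) (auto simp: u1_def D_def)
  have u2: "cmod (u2 powr complex_of_real (- \<gamma>)) \<le> D powr (- \<gamma>)"
    using \<gamma> D C' z by (intro norm_powr_neg_le) (auto simp: u2_def D_def)
  have "(w + \<bar>Re z\<bar>) powr (2 * (\<delta> + \<gamma>) - 1) \<le> D powr (2 * (\<delta> + \<gamma>) - 1)"
    using s w E by (intro powr_mono2) (auto simp: D_def)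
  moreover have "(cmod (u1 powr complex_of_real (- \<delta>) *
      (complex_of_real (sqrt (real (N + 1))) * (u2 powr complex_of_real (- \<gamma>) * P))))\<^sup>2
    \<le> (D powr (- \<delta>))\<^sup>2 * real (Suc N) * (D powr (- \<gamma>))\<^sup>2 * (cmod P)\<^sup>2"
    using u1 u2 by (simp add: norm_mult power_mult_distrib mult_ac mult_mono power_mono)
  ultimately have "w * (w + \<bar>Re z\<bar>) powr (2 * (\<delta> + \<gamma>) - 1) *
      (cmod (u1 powr complex_of_real (- \<delta>) *
        (complex_of_real (sqrt (real (N + 1))) * (u2 powr complex_of_real (- \<gamma>) * P))))\<^sup>2
    \<le> w * D powr (2 * (\<delta> + \<gamma>) - 1) * ((D powr (- \<delta>))\<^sup>2 * real (Suc N) * (D powr (- \<gamma>))\<^sup>2 * (cmod P)\<^sup>2)"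
    using w by (intro mult_mono mult_left_mono) auto
  also have "\<dots> = real (Suc N) * w * (D powr (2 * (\<delta> + \<gamma>) - 1) * (D powr (- \<delta>))\<^sup>2 * (D powr (- \<gamma>))\<^sup>2)
      * (cmod P)\<^sup>2"
    by (simp only: mult_ac)
  also have "D powr (2 * (\<delta> + \<gamma>) - 1) * (D powr (- \<delta>))\<^sup>2 * (D powr (- \<gamma>))\<^sup>2 = D powr (- 1)"
  proof -
    have "D powr (2 * (\<delta> + \<gamma>) - 1) * (D powr (- \<delta>))\<^sup>2 * (D powr (- \<gamma>))\<^sup>2
        = D powr ((2 * (\<delta> + \<gamma>) - 1) + (- \<delta>) + (- \<delta>) + (- \<gamma>) + (- \<gamma>))"
      by (simp only: powr_add power2_eq_square mult.assoc)
    then show ?thesis by simp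
  qed
  also have "real (Suc N) * w * D powr (- 1) * (cmod P)\<^sup>2 = real (Suc N) * w / D * (cmod P)\<^sup>2"
    using D by (simp add: powr_minus_divide)
  finally show ?thesis
    unfolding u1_def u2_def D_def .
qed

lemma omega_nonneg: "0 \<le> omega mass p"
  by (simp add: omega_def)

lemma omega_pos: "0 < mass \<Longrightarrow> 0 < omega mass p"
  by (simp add: omega_def add_nonneg_pos)

lemma borel_measurable_omega [measurable]: "omega mass \<in> borel_measurable borel"
  unfolding omega_def by measurable

lemma energy_nonneg: "0 \<le> energy mb mf n m c"
  by (simp add: energy_def sum_nonneg omega_nonneg)

lemma energy_ins: "energy mb mf (Suc n) m (ins n q x, y) = omega mb q + energy mb mf n m (x, y)"
proof -
  have "(\<Sum>i<Suc n. omega mb (ins n q x i)) = omega mb q + (\<Sum>i<n. omega mb (x i))"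
    by (subst sum.lessThan_Suc_shift) (auto simp: ins_def intro!: sum.cong)
  then show ?thesis
    by (simp add: energy_def)
qed

definition ins_perm :: "nat \<Rightarrow> nat \<Rightarrow> nat" where
  "ins_perm n i = (if i = 0 then n else if i \<le> n then i - 1 else i)"

lemma ins_perm_permutes: "ins_perm n permutes {..<Suc n}"
proof (rule bij_imp_permutes)
  show "bij_betw (ins_perm n) {..<Suc n} {..<Suc n}"
    by (rule bij_betw_byWitness[where f' = "\<lambda>i. if i = n then 0 else if i < n then i + 1 else i"])
       (auto simp: ins_perm_def)
qed (simp add: ins_perm_def)

lemma ins_eq_fun_upd_comp:
  "x \<in> space (PiM {..<n} (\<lambda>_. M)) \<Longrightarrow> ins n q x = x(n := q) \<circ> ins_perm n"
  by (auto simp: ins_def ins_perm_def space_PiM PiE_def extensional_def fun_eq_iff)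

lemma measurable_ins [measurable]:
  fixes f :: "'a \<Rightarrow> real^'d::finite"
  assumes "f \<in> measurable N lborel" and "g \<in> measurable N (PiM {..<n} (\<lambda>_. lborel :: (real^'d) measure))"
  shows "(\<lambda>p. ins n (f p) (g p)) \<in> measurable N (PiM {..<Suc n} (\<lambda>_. lborel :: (real^'d) measure))"
proof (rule measurable_PiM_single')
  fix i assume i: "i \<in> {..<Suc n}"
  show "(\<lambda>p. ins n (f p) (g p) i) \<in> measurable N lborel"
  proof (cases "i = 0")
    case False
    then have "i - 1 \<in> {..<n}"
      using i by auto
    then have "(\<lambda>p. g p (i - 1)) \<in> measurable N lborel"
      using assms(2) by measurable
    then show ?thesis
      using False i by (simp add: ins_def)
  qed (use assms(1) in \<open>simp add: ins_def\<close>)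
qed (auto simp: ins_def split: if_splits)

definition fock_swap :: "'d::finite fock \<Rightarrow> 'd fock" where
  "fock_swap Phi = (\<lambda>n m c. Phi m n (snd c, fst c))"

lemma res_pow_fock_swap: "res_pow mb mf w s (fock_swap Phi) = fock_swap (res_pow mf mb w s Phi)"
  by (simp add: res_pow_def fock_swap_def energy_def add.commute)

lemma ann_b_eq_fock_swap: "ann_b Phi k = fock_swap (ann_a (fock_swap Phi) k)"
  by (simp add: ann_a_def ann_b_def fock_swap_def)

lemma fock_vector_measurable: "fock_vector Psi \<Longrightarrow> Psi n m \<in> borel_measurable (fock_meas n m)"
  by (simp add: fock_vector_def)

lemma fock_vector_boson_symmetric:
  assumes "fock_vector Psi" and "(x, y) \<in> space (fock_meas n m)" and "\<sigma> permutes {..<n}"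
  shows "cmod (Psi n m (x \<circ> \<sigma>, y)) = cmod (Psi n m (x, y))"
  using assms by (simp add: fock_vector_def)

lemma fock_vector_fock_swap_boson_symmetric:
  assumes "fock_vector Psi" and "(x, y) \<in> space (fock_meas n m)" and "\<sigma> permutes {..<n}"
  shows "cmod (fock_swap Psi n m (x \<circ> \<sigma>, y)) = cmod (fock_swap Psi n m (x, y))"
proof -
  have "(y, x) \<in> space (fock_meas m n)"
    using assms(2) by (simp add: fock_meas_def space_pair_measure)
  then have "Psi m n (y, x \<circ> \<sigma>) = of_int (sign \<sigma>) * Psi m n (y, x)"
    using assms(1,3) by (simp add: fock_vector_def)
  then show ?thesis
    by (simp add: fock_swap_def norm_mult sign_def)
qed

lemma borel_measurable_fock_swap:
  assumes "\<And>n m. Psi n m \<in> borel_measurable (fock_meas n m)"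
  shows "fock_swap Psi n m \<in> borel_measurable (fock_meas n m)"
  using measurable_compose[OF measurable_pair_swap' assms[of m n, unfolded fock_meas_def]]
  by (simp add: fock_swap_def fock_meas_def case_prod_beta)

lemma fock_norm2_fock_swap:
  assumes "\<And>n m. Psi n m \<in> borel_measurable (fock_meas n m)"
  shows "fock_norm2 (fock_swap Psi) = fock_norm2 Psi"
  using fock_sum_swap[of "\<lambda>n m c. ennreal ((cmod (Psi n m c))\<^sup>2)"] assms
  by (simp add: fock_norm2_def fock_swap_def)

definition pull_through_density ::
    "real \<Rightarrow> real \<Rightarrow> real \<Rightarrow> 'd::finite fock \<Rightarrow> nat \<Rightarrow> nat \<Rightarrow> real^'d \<Rightarrow> 'd config \<Rightarrow> real" where
  "pull_through_density mb mf a Psi n m q c =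
     real (Suc n) * omega mb q / (omega mb q + energy mb mf n m c + a)
       * (cmod (Psi (Suc n) m (ins n q (fst c), snd c)))\<^sup>2"

lemma borel_measurable_pull_through_density:
  fixes Psi :: "'d::finite fock"
  assumes "Psi (Suc n) m \<in> borel_measurable (fock_meas (Suc n) m)"
  shows "(\<lambda>p. pull_through_density mb mf a Psi n m (fst p) (snd p))
    \<in> borel_measurable (lborel \<Otimes>\<^sub>M fock_meas n m)"
proof -
  note [measurable] = assms[unfolded fock_meas_def]
  show ?thesis
    unfolding pull_through_density_def energy_def fock_meas_def by measurable
qed

lemma pull_through_density_sector_le:
  fixes Psi :: "'d::finite fock"
  assumes a: "0 \<le> a" and meas: "Psi (Suc n) m \<in> borel_measurable (fock_meas (Suc n) m)"
    and sym: "\<And>x y \<sigma>. (x, y) \<in> space (fock_meas (Suc n) m) \<Longrightarrow> \<sigma> permutes {..<Suc n} \<Longrightarrow>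
      cmod (Psi (Suc n) m (x \<circ> \<sigma>, y)) = cmod (Psi (Suc n) m (x, y))"
  shows "(\<integral>\<^sup>+q. \<integral>\<^sup>+c. ennreal (pull_through_density mb mf a Psi n m q c) \<partial>fock_meas n m \<partial>lborel)
    \<le> (\<integral>\<^sup>+c. ennreal ((cmod (Psi (Suc n) m c))\<^sup>2) \<partial>fock_meas (Suc n) m)"
proof -
  let ?M = "\<lambda>k. PiM {..<k} (\<lambda>_. lborel :: (real^'d) measure)"
  interpret pair_sigma_finite "?M (Suc n)" "?M m"
    by (rule pair_sigma_finite_fock_meas)
  have "(\<integral>\<^sup>+q. \<integral>\<^sup>+c. ennreal (pull_through_density mb mf a Psi n m q c) \<partial>fock_meas n m \<partial>lborel)
      = (\<integral>\<^sup>+y. \<integral>\<^sup>+q. \<integral>\<^sup>+x. ennreal (pull_through_density mb mf a Psi n m q (x, y)) \<partial>?M n \<partial>lborel \<partial>?M m)"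
  proof -
    have "(\<lambda>p. ennreal (pull_through_density mb mf a Psi n m (fst p) (snd p)))
        \<in> borel_measurable (lborel \<Otimes>\<^sub>M (?M n \<Otimes>\<^sub>M ?M m))"
      using borel_measurable_pull_through_density[where Psi = Psi, OF meas]
      unfolding fock_meas_def by measurable
    from nn_integral_pair_reorder[OF sigma_finite_lborel pair_sigma_finite_fock_meas this]
    show ?thesis
      by (simp add: fock_meas_def)
  qed
  also have "\<dots> \<le> (\<integral>\<^sup>+y. \<integral>\<^sup>+x. ennreal ((cmod (Psi (Suc n) m (x, y)))\<^sup>2) \<partial>?M (Suc n) \<partial>?M m)"
  proof (rule nn_integral_mono)
    fix y assume y: "y \<in> space (?M m)"
    define G where "G x = (cmod (Psi (Suc n) m (x, y)))\<^sup>2" for x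
    have G_meas: "G \<in> borel_measurable (?M (Suc n))"
      using meas y unfolding G_def fock_meas_def by measurable
    have G_sym: "G (x \<circ> \<sigma>) = G x" if "x \<in> space (?M (Suc n))" "\<sigma> permutes {..<Suc n}" for x \<sigma>
      using sym[of x y \<sigma>] that y by (simp add: G_def fock_meas_def space_pair_measure)
    have "pull_through_density mb mf a Psi n m q (x, y)
        = real (Suc n) * omega mb q / (omega mb q + (\<Sum>i<n. omega mb (x i)) + ((\<Sum>j<m. omega mf (y j)) + a))
          * G (x(n := q))"
      if "x \<in> space (?M n)" for q x
    proof -
      have "x(n := q) \<in> space (?M (Suc n))"
        using that by (auto simp: space_PiM PiE_def extensional_def)
      then show ?thesis
        using ins_eq_fun_upd_comp[OF that] G_sym[OF _ ins_perm_permutes]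
        by (simp add: pull_through_density_def G_def energy_def add_ac)
    qed
    then have "(\<integral>\<^sup>+q. \<integral>\<^sup>+x. ennreal (pull_through_density mb mf a Psi n m q (x, y)) \<partial>?M n \<partial>lborel)
        = (\<integral>\<^sup>+q. \<integral>\<^sup>+x. ennreal (real (Suc n) * omega mb q
            / (omega mb q + (\<Sum>i<n. omega mb (x i)) + ((\<Sum>j<m. omega mf (y j)) + a)) * G (x(n := q)))
          \<partial>?M n \<partial>lborel)"
      by (intro nn_integral_cong) simp
    also have "\<dots> \<le> (\<integral>\<^sup>+x. ennreal (G x) \<partial>?M (Suc n))"
      using a G_meas G_sym
      by (intro nn_integral_PiM_insert_weight_le sigma_finite_lborel)
         (auto simp: omega_nonneg sum_nonneg G_def[abs_def])
    finally show "(\<integral>\<^sup>+q. \<integral>\<^sup>+x. ennreal (pull_through_density mb mf a Psi n m q (x, y)) \<partial>?M n \<partial>lborel)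
        \<le> (\<integral>\<^sup>+x. ennreal ((cmod (Psi (Suc n) m (x, y)))\<^sup>2) \<partial>?M (Suc n))"
      unfolding G_def .
  qed
  also have "\<dots> = (\<integral>\<^sup>+c. ennreal ((cmod (Psi (Suc n) m c))\<^sup>2) \<partial>fock_meas (Suc n) m)"
  proof -
    note [measurable] = meas[unfolded fock_meas_def]
    show ?thesis
      unfolding fock_meas_def by (intro nn_integral_snd) measurable
  qed
  finally show ?thesis .
qed

lemma nn_integral_pull_through_density_le:
  fixes Psi :: "'d::finite fock"
  assumes a: "0 \<le> a" and meas: "\<And>n m. Psi n m \<in> borel_measurable (fock_meas n m)"
    and sym: "\<And>n m x y \<sigma>. (x, y) \<in> space (fock_meas n m) \<Longrightarrow> \<sigma> permutes {..<n} \<Longrightarrow>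
      cmod (Psi n m (x \<circ> \<sigma>, y)) = cmod (Psi n m (x, y))"
  shows "(\<integral>\<^sup>+q. (\<Sum>n. \<Sum>m. \<integral>\<^sup>+c. ennreal (pull_through_density mb mf a Psi n m q c) \<partial>fock_meas n m) \<partial>lborel)
    \<le> fock_norm2 Psi"
proof -
  let ?F = "\<lambda>n m. \<integral>\<^sup>+c. ennreal ((cmod (Psi n m c))\<^sup>2) \<partial>fock_meas n m"
  have sector_meas: "(\<lambda>q. \<integral>\<^sup>+c. ennreal (pull_through_density mb mf a Psi n m q c) \<partial>fock_meas n m)
      \<in> borel_measurable lborel" for n m
    using sigma_finite_measure.borel_measurable_nn_integral_fst[OF sigma_finite_fock_meas
        measurable_compose[OF borel_measurable_pull_through_density[where Psi = Psi, OF meas] measurable_ennreal]]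
    by simp
  have "(\<integral>\<^sup>+q. (\<Sum>n. \<Sum>m. \<integral>\<^sup>+c. ennreal (pull_through_density mb mf a Psi n m q c) \<partial>fock_meas n m) \<partial>lborel)
      = (\<Sum>n. \<Sum>m. \<integral>\<^sup>+q. \<integral>\<^sup>+c. ennreal (pull_through_density mb mf a Psi n m q c) \<partial>fock_meas n m \<partial>lborel)"
    using sector_meas by (simp add: nn_integral_suminf borel_measurable_suminf_order)
  also have "\<dots> \<le> (\<Sum>n. \<Sum>m. ?F (Suc n) m)"
    using a meas sym by (intro suminf_le summableI pull_through_density_sector_le) auto
  also have "\<dots> \<le> (\<Sum>n. \<Sum>m. ?F n m)"
    by (rule suminf_Suc_le_ennreal)
  finally show ?thesis
    unfolding fock_norm2_def .
qed

lemma fock_norm2_le_pointwise: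
  fixes X :: "'d::finite fock" and B :: "nat \<Rightarrow> nat \<Rightarrow> 'd config \<Rightarrow> real"
  assumes W: "0 < W" and XB: "\<And>n m c. W * (cmod (X n m c))\<^sup>2 \<le> B n m c"
    and B: "\<And>n m. B n m \<in> borel_measurable (fock_meas n m)"
  shows "ennreal W * fock_norm2 X \<le> (\<Sum>n. \<Sum>m. \<integral>\<^sup>+c. ennreal (B n m c) \<partial>fock_meas n m)"
proof -
  have B_nonneg: "0 \<le> B n m c" for n m c
    by (rule order_trans[OF _ XB]) (use W in simp)
  have "fock_norm2 X \<le> (\<Sum>n. \<Sum>m. \<integral>\<^sup>+c. ennreal (B n m c / W) \<partial>fock_meas n m)"
    unfolding fock_norm2_def using XB W
    by (intro suminf_le summableI nn_integral_mono ennreal_leI) (simp add: pos_le_divide_eq mult.commute)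
  then have "ennreal W * fock_norm2 X \<le> ennreal W * (\<Sum>n. \<Sum>m. \<integral>\<^sup>+c. ennreal (B n m c / W) \<partial>fock_meas n m)"
    by (rule mult_left_mono) simp
  also have "\<dots> = (\<Sum>n. \<Sum>m. \<integral>\<^sup>+c. ennreal W * ennreal (B n m c / W) \<partial>fock_meas n m)"
    using B by (simp add: ennreal_suminf_cmult nn_integral_cmult)
  also have "\<dots> = (\<Sum>n. \<Sum>m. \<integral>\<^sup>+c. ennreal (B n m c) \<partial>fock_meas n m)"
    using W B_nonneg by (simp add: ennreal_mult[symmetric])
  finally show ?thesis .
qed

lemma fock_norm2_fock_swap_le_pointwise:
  fixes X :: "'d::finite fock" and B :: "nat \<Rightarrow> nat \<Rightarrow> 'd config \<Rightarrow> real"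
  assumes W: "0 < W" and XB: "\<And>n m c. W * (cmod (X n m c))\<^sup>2 \<le> B n m c"
    and B: "\<And>n m. B n m \<in> borel_measurable (fock_meas n m)"
  shows "ennreal W * fock_norm2 (fock_swap X) \<le> (\<Sum>n. \<Sum>m. \<integral>\<^sup>+c. ennreal (B n m c) \<partial>fock_meas n m)"
proof -
  have "(\<lambda>c. B m n (snd c, fst c)) \<in> borel_measurable (fock_meas n m)" for n m
    using measurable_compose[OF measurable_pair_swap' B[of m n, unfolded fock_meas_def]]
    by (simp add: fock_meas_def case_prod_beta)
  then have "ennreal W * fock_norm2 (fock_swap X)
      \<le> (\<Sum>n. \<Sum>m. \<integral>\<^sup>+c. ennreal (B m n (snd c, fst c)) \<partial>fock_meas n m)"
    using W XB by (intro fock_norm2_le_pointwise) (auto simp: fock_swap_def)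
  also have "\<dots> = (\<Sum>n. \<Sum>m. \<integral>\<^sup>+c. ennreal (B n m c) \<partial>fock_meas n m)"
    using B by (intro fock_sum_swap) simp
  finally show ?thesis .
qed

lemma res_pow_ann_a_pointwise_le:
  fixes Psi :: "'d::finite fock"
  assumes mb: "0 < mb" and z: "Re z \<le> 0" and C: "0 \<le> C" and C': "0 \<le> C'"
    and \<delta>: "0 \<le> \<delta>" and \<gamma>: "0 \<le> \<gamma>" and s: "1/2 \<le> \<gamma> + \<delta>"
  shows "omega mb q * (omega mb q + \<bar>Re z\<bar>) powr (2 * (\<delta> + \<gamma>) - 1)
      * (cmod (res_pow mb mf (z - complex_of_real (omega mb q) - complex_of_real C) \<delta>
          (ann_a (res_pow mb mf (z - complex_of_real C') \<gamma> Psi) q) n m c))\<^sup>2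
    \<le> pull_through_density mb mf \<bar>Re z\<bar> Psi n m q c"
proof -
  obtain x y where c: "c = (x, y)"
    by (cases c)
  have "omega mb q * (omega mb q + \<bar>Re z\<bar>) powr (2 * (\<delta> + \<gamma>) - 1)
      * (cmod (res_pow mb mf (z - complex_of_real (omega mb q) - complex_of_real C) \<delta>
          (ann_a (res_pow mb mf (z - complex_of_real C') \<gamma> Psi) q) n m c))\<^sup>2
    \<le> real (Suc n) * omega mb q / (omega mb q + energy mb mf n m c + \<bar>Re z\<bar>)
      * (cmod (Psi (n + 1) m (ins n q x, y)))\<^sup>2"
    using resolvent_annihilation_pointwise[OF omega_pos[OF mb] energy_nonneg z C C' \<delta> \<gamma> s]
    by (simp add: c res_pow_def ann_a_def energy_ins)
  then show ?thesis
    by (simp add: c pull_through_density_def)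
qed

lemma annihilation_estimate:
  fixes Psi :: "'d::finite fock"
  assumes mb: "0 < mb" and z: "Re z \<le> 0" and C: "0 \<le> C" and C': "0 \<le> C'"
    and \<delta>: "0 \<le> \<delta>" and \<gamma>: "0 \<le> \<gamma>" and s: "1/2 \<le> \<gamma> + \<delta>"
    and meas: "\<And>n m. Psi n m \<in> borel_measurable (fock_meas n m)"
    and sym: "\<And>n m x y \<sigma>. (x, y) \<in> space (fock_meas n m) \<Longrightarrow> \<sigma> permutes {..<n} \<Longrightarrow>
      cmod (Psi n m (x \<circ> \<sigma>, y)) = cmod (Psi n m (x, y))"
  shows "(\<integral>\<^sup>+q. ennreal (omega mb q * (omega mb q + \<bar>Re z\<bar>) powr (2 * (\<delta> + \<gamma>) - 1))
      * fock_norm2 (res_pow mb mf (z - complex_of_real (omega mb q) - complex_of_real C) \<delta>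
          (ann_a (res_pow mb mf (z - complex_of_real C') \<gamma> Psi) q)) \<partial>lborel) \<le> fock_norm2 Psi"
    and "(\<integral>\<^sup>+q. ennreal (omega mb q * (omega mb q + \<bar>Re z\<bar>) powr (2 * (\<delta> + \<gamma>) - 1))
      * fock_norm2 (fock_swap (res_pow mb mf (z - complex_of_real (omega mb q) - complex_of_real C) \<delta>
          (ann_a (res_pow mb mf (z - complex_of_real C') \<gamma> Psi) q))) \<partial>lborel) \<le> fock_norm2 Psi"
proof -
  let ?B = "\<lambda>q n m c. ennreal (pull_through_density mb mf \<bar>Re z\<bar> Psi n m q c)"
  have W: "0 < omega mb q * (omega mb q + \<bar>Re z\<bar>) powr (2 * (\<delta> + \<gamma>) - 1)" for q
  proof -
    have "0 < omega mb q + \<bar>Re z\<bar>"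
      using omega_pos[OF mb, of q] by linarith
    then show ?thesis
      using omega_pos[OF mb, of q] by simp
  qed
  have B: "pull_through_density mb mf \<bar>Re z\<bar> Psi n m q \<in> borel_measurable (fock_meas n m)" for q n m
    using measurable_compose[OF measurable_Pair1' borel_measurable_pull_through_density[where Psi = Psi, OF meas]]
    by simp
  note pointwise = res_pow_ann_a_pointwise_le[OF mb z C C' \<delta> \<gamma> s]
  have "(\<integral>\<^sup>+q. ennreal (omega mb q * (omega mb q + \<bar>Re z\<bar>) powr (2 * (\<delta> + \<gamma>) - 1))
      * fock_norm2 (res_pow mb mf (z - complex_of_real (omega mb q) - complex_of_real C) \<delta>
          (ann_a (res_pow mb mf (z - complex_of_real C') \<gamma> Psi) q)) \<partial>lborel)
    \<le> (\<integral>\<^sup>+q. (\<Sum>n. \<Sum>m. \<integral>\<^sup>+c. ?B q n m c \<partial>fock_meas n m) \<partial>lborel)"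
    using W B pointwise by (intro nn_integral_mono fock_norm2_le_pointwise)
  moreover have "(\<integral>\<^sup>+q. ennreal (omega mb q * (omega mb q + \<bar>Re z\<bar>) powr (2 * (\<delta> + \<gamma>) - 1))
      * fock_norm2 (fock_swap (res_pow mb mf (z - complex_of_real (omega mb q) - complex_of_real C) \<delta>
          (ann_a (res_pow mb mf (z - complex_of_real C') \<gamma> Psi) q))) \<partial>lborel)
    \<le> (\<integral>\<^sup>+q. (\<Sum>n. \<Sum>m. \<integral>\<^sup>+c. ?B q n m c \<partial>fock_meas n m) \<partial>lborel)"
    using W B pointwise by (intro nn_integral_mono fock_norm2_fock_swap_le_pointwise)
  moreover have "(\<integral>\<^sup>+q. (\<Sum>n. \<Sum>m. \<integral>\<^sup>+c. ?B q n m c \<partial>fock_meas n m) \<partial>lborel) \<le> fock_norm2 Psi"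
    using meas sym by (intro nn_integral_pull_through_density_le) auto
  ultimately show "(\<integral>\<^sup>+q. ennreal (omega mb q * (omega mb q + \<bar>Re z\<bar>) powr (2 * (\<delta> + \<gamma>) - 1))
      * fock_norm2 (res_pow mb mf (z - complex_of_real (omega mb q) - complex_of_real C) \<delta>
          (ann_a (res_pow mb mf (z - complex_of_real C') \<gamma> Psi) q)) \<partial>lborel) \<le> fock_norm2 Psi"
    and "(\<integral>\<^sup>+q. ennreal (omega mb q * (omega mb q + \<bar>Re z\<bar>) powr (2 * (\<delta> + \<gamma>) - 1))
      * fock_norm2 (fock_swap (res_pow mb mf (z - complex_of_real (omega mb q) - complex_of_real C) \<delta>
          (ann_a (res_pow mb mf (z - complex_of_real C') \<gamma> Psi) q))) \<partial>lborel) \<le> fock_norm2 Psi"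
    by (blast intro: order_trans)+
qed

theorem lemmaB3:
  fixes mb mf C C' \<delta> \<gamma> :: real and z :: complex and Psi :: "'d::finite fock"
  assumes "mb > 0" and "mf > 0" and "Re z < -1"
    and "C \<ge> 0" and "C' \<ge> 0" and "\<delta> \<ge> 0" and "\<gamma> \<ge> 0"
    and "1/2 \<le> \<gamma> + \<delta>" and "\<gamma> + \<delta> \<le> 1"
    and "fock_vector Psi"
  shows "((\<integral>\<^sup>+ q. ennreal (omega mb q * (omega mb q + \<bar>Re z\<bar>) powr (2 * (\<delta> + \<gamma>) - 1))
            * fock_norm2 (res_pow mb mf (z - complex_of_real (omega mb q) - complex_of_real C) \<delta>
                (ann_a (res_pow mb mf (z - complex_of_real C') \<gamma> Psi) q)) \<partial>lborel)
          \<le> fock_norm2 Psi) \<and>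
         ((\<integral>\<^sup>+ k. ennreal (omega mf k * (omega mf k + \<bar>Re z\<bar>) powr (2 * (\<delta> + \<gamma>) - 1))
            * fock_norm2 (res_pow mb mf (z - complex_of_real (omega mf k) - complex_of_real C) \<delta>
                (ann_b (res_pow mb mf (z - complex_of_real C') \<gamma> Psi) k)) \<partial>lborel)
          \<le> fock_norm2 Psi)"
proof -
  have z: "Re z \<le> 0"
    using assms(3) by simp
  note meas = fock_vector_measurable[OF assms(10)]
  show ?thesis
    using annihilation_estimate(1)[OF assms(1) z assms(4-8) meas fock_vector_boson_symmetric[OF assms(10)]]
      annihilation_estimate(2)[OF assms(2) z assms(4-8) borel_measurable_fock_swap[OF meas]
        fock_vector_fock_swap_boson_symmetric[OF assms(10)], of mb]
    by (simp add: ann_b_eq_fock_swap res_pow_fock_swap fock_norm2_fock_swap[OF meas])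
qed

end
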